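(* Let $X$ be a complete abelian metric group and let $f:X\to\mathbb{R}$ be a subadditive function bounded above on a set $T\subset X$ such that for some $k\in\mathbb{N}$ the $k$-fold sum $\sum_{i=1}^k T$ is either universally Baire and not Haar-meagre, or universally measurable and not Haar-null. Then $f$ is locally bounded at each point of $X$.
   Context: A complete abelian metric group is an abelian topological group with an invariant metric that is complete. A function $f$ is subadditive if $f(x+y)\le f(x)+f(y)$ for all $x,y$. The $k$-fold sum is $\sum_{i=1}^kT=\{t_1+\dots+t_k:t_i\in T\}$. A set $A\subset X$ is universally measurable if it is measurable with respect to every complete Borel probability measure on $X$; a universally measurable set $B$ is Haar-null if there is a $\sigma$-additive Borel probability measure $\mu$ on $X$ with $\mu(B+x)=0$ for all $x\in X$. A set $A\subset X$ is universally Baire if for every continuous map $g:K\to X$ from a compact metric space $K$ the set $g^{-1}(A+x)$ has the Baire property in $K$ for every $x\in X$; a universally Baire set $B$ is Haar-meagre if there is a continuous map $g:K\to X$ from a non-empty compact metric space $K$ such that $g^{-1}(B+x)$ is meagre in $K$ for every $x\in X$. Locally bounded at a point means $|f|$ is bounded on some neighbourhood of that point. *)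

theory Defs
  imports "HOL-Probability.Probability"
begin

definition translate :: "'a::ab_group_add set \<Rightarrow> 'a \<Rightarrow> 'a set" where
  "translate A x = (\<lambda>a. a + x) ` A"

definition kfold_sum :: "nat \<Rightarrow> 'a::ab_group_add set \<Rightarrow> 'a set" where
  "kfold_sum k T = {(\<Sum>i<k. t i) | t. \<forall>i<k. t i \<in> T}"

definition subadditive :: "('a::plus \<Rightarrow> real) \<Rightarrow> bool" where
  "subadditive f \<longleftrightarrow> (\<forall>x y. f (x + y) \<le> f x + f y)"

text \<open>Complete abelian metric group: abelian group with a complete invariant metric
  (invariance implies that the group operations are continuous).\<close>
definition invariant_metric :: "'a::{ab_group_add, metric_space} itself \<Rightarrow> bool" where
  "invariant_metric _ \<longleftrightarrow> (\<forall>x y z::'a. dist (x + z) (y + z) = dist x y)"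

definition nowhere_dense_in :: "'k topology \<Rightarrow> 'k set \<Rightarrow> bool" where
  "nowhere_dense_in K S \<longleftrightarrow> S \<subseteq> topspace K \<and> K interior_of (K closure_of S) = {}"

definition meagre_in :: "'k topology \<Rightarrow> 'k set \<Rightarrow> bool" where
  "meagre_in K S \<longleftrightarrow> S \<subseteq> topspace K \<and>
     (\<exists>N :: nat \<Rightarrow> 'k set. (\<forall>n. nowhere_dense_in K (N n)) \<and> S \<subseteq> (\<Union>n. N n))"

definition baire_property_in :: "'k topology \<Rightarrow> 'k set \<Rightarrow> bool" where
  "baire_property_in K S \<longleftrightarrow> S \<subseteq> topspace K \<and>
     (\<exists>U. openin K U \<and> meagre_in K ((S - U) \<union> (U - S)))"

text \<open>Compact metric spaces are represented (up to homeomorphism) by compact metrizable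
  topologies on subsets of the reals; every compact metric space has cardinality at most
  the continuum, so this loses no generality.\<close>
definition compact_metric_space :: "real topology \<Rightarrow> bool" where
  "compact_metric_space K \<longleftrightarrow> compact_space K \<and> metrizable_space K"

definition universally_Baire :: "'a::{ab_group_add, metric_space} set \<Rightarrow> bool" where
  "universally_Baire A \<longleftrightarrow>
     (\<forall>K g. compact_metric_space K \<longrightarrow> continuous_map K euclidean g \<longrightarrow>
        (\<forall>x. baire_property_in K {k \<in> topspace K. g k \<in> translate A x}))"

definition Haar_meagre :: "'a::{ab_group_add, metric_space} set \<Rightarrow> bool" where
  "Haar_meagre B \<longleftrightarrow> universally_Baire B \<and>
     (\<exists>K g. compact_metric_space K \<and> topspace K \<noteq> {} \<and> continuous_map K euclidean g \<and>
        (\<forall>x. meagre_in K {k \<in> topspace K. g k \<in> translate B x}))"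

definition borel_prob :: "'a::topological_space measure \<Rightarrow> bool" where
  "borel_prob \<mu> \<longleftrightarrow> sets \<mu> = sets borel \<and> prob_space \<mu>"

definition universally_measurable :: "'a::{ab_group_add, metric_space} set \<Rightarrow> bool" where
  "universally_measurable A \<longleftrightarrow> (\<forall>\<mu>. borel_prob \<mu> \<longrightarrow> A \<in> sets (completion \<mu>))"

definition Haar_null :: "'a::{ab_group_add, metric_space} set \<Rightarrow> bool" where
  "Haar_null B \<longleftrightarrow> universally_measurable B \<and>
     (\<exists>\<mu>. borel_prob \<mu> \<and> (\<forall>x. emeasure (completion \<mu>) (translate B x) = 0))"

definition locally_bounded_at :: "('a::topological_space \<Rightarrow> real) \<Rightarrow> 'a \<Rightarrow> bool" where
  "locally_bounded_at f p \<longleftrightarrow> (\<exists>U M. open U \<and> p \<in> U \<and> (\<forall>y\<in>U. \<bar>f y\<bar> \<le> M))"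

end

theory Submission
  imports Defs
begin

text \<open>
  If \<open>f\<close> is bounded above on a ball around \<open>0\<close>, it is locally bounded everywhere, since
  \<open>f y \<le> f p + f (y - p)\<close> and \<open>f p \<le> f y + f (p - y)\<close>. Otherwise choose \<open>x\<^sub>n\<close> with
  \<open>d(x\<^sub>n, 0) \<le> 2\<^sup>-\<^sup>n\<close> and \<open>f(x\<^sub>n) > n\<close>. By subadditivity \<open>f\<close> is bounded above on
  \<open>A = T + \<dots> + T\<close>, so \<open>f(x\<^sub>n) \<le> f(y + x\<^sub>n) + f(-y)\<close> shows that every translate of \<open>A\<close>
  contains only finitely many \<open>x\<^sub>n\<close>. The map \<open>w \<mapsto> \<Sum>{x\<^sub>n | w\<^sub>n}\<close> from the Cantor space
  to \<open>X\<close> is continuous and Borel, and switching a coordinate \<open>w\<^sub>n\<close> from \<open>False\<close> to \<open>True\<close>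
  adds \<open>x\<^sub>n\<close>. Hence in the preimage of any translate of \<open>A\<close> every point has only finitely
  many such switches that stay in the preimage. A set of this kind is meagre if it has the Baire
  property (Baire category theorem, switches being homeomorphisms), and it is null for the
  coin-tossing measure if it is measurable (switches preserve the measure and, by approximation
  with cylinder sets, nearly fix every measurable set when performed at large positions). So \<open>A\<close>
  would be both Haar-meagre and Haar-null.
\<close>

section \<open>Meagre sets\<close>

lemma meagre_in_subset: "meagre_in X S \<Longrightarrow> T \<subseteq> S \<Longrightarrow> meagre_in X T"
  unfolding meagre_in_def by blast

lemma nowhere_dense_imp_meagre_in: "nowhere_dense_in X S \<Longrightarrow> meagre_in X S"
  unfolding meagre_in_def nowhere_dense_in_def by (intro conjI exI[of _ "\<lambda>_. S"]) auto

lemma meagre_in_UN: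
  assumes "\<And>k::nat. meagre_in X (S k)"
  shows "meagre_in X (\<Union>k. S k)"
proof -
  obtain N :: "nat \<Rightarrow> nat \<Rightarrow> _"
    where N: "\<And>k n. nowhere_dense_in X (N k n)" "\<And>k. S k \<subseteq> (\<Union>n. N k n)"
    using assms unfolding meagre_in_def by metis
  have "(\<Union>k. S k) \<subseteq> (\<Union>m. case_prod N (prod_decode m))"
  proof
    fix x assume "x \<in> (\<Union>k. S k)"
    then obtain k n where "x \<in> N k n" using N(2) by blast
    then show "x \<in> (\<Union>m. case_prod N (prod_decode m))"
      by (intro UN_I[of "prod_encode (k, n)"]) auto
  qed
  moreover have "nowhere_dense_in X (case_prod N (prod_decode m))" for m
    using N(1) by (simp split: prod.split)
  moreover have "(\<Union>k. S k) \<subseteq> topspace X"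
    using assms unfolding meagre_in_def by blast
  ultimately show ?thesis
    unfolding meagre_in_def by (intro conjI exI[of _ "\<lambda>m. case_prod N (prod_decode m)"] allI)
qed

lemma meagre_in_Un:
  assumes "meagre_in X S" "meagre_in X T"
  shows "meagre_in X (S \<union> T)"
proof -
  have "S \<union> T \<subseteq> (\<Union>k::nat. if k = 0 then S else T)"
    by (auto intro: UN_I[of 0] UN_I[of 1])
  moreover have "meagre_in X (\<Union>k::nat. if k = 0 then S else T)"
    by (rule meagre_in_UN) (use assms in auto)
  ultimately show ?thesis
    by (rule meagre_in_subset[rotated])
qed

lemma meagre_in_openin_empty:
  assumes "completely_metrizable_space X" "meagre_in X U" "openin X U"
  shows "U = {}"
proof -
  obtain N :: "nat \<Rightarrow> _" where N: "\<And>n. nowhere_dense_in X (N n)" "U \<subseteq> (\<Union>n. N n)"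
    using assms(2) unfolding meagre_in_def by blast
  have "X interior_of (\<Union>n. X closure_of N n) = {}"
  proof (rule Baire_category_alt)
    fix T assume "T \<in> range (\<lambda>n. X closure_of N n)"
    then show "closedin X T \<and> X interior_of T = {}"
      using N(1) by (auto simp: nowhere_dense_in_def)
  qed (use assms(1) in simp_all)
  moreover have "U \<subseteq> (\<Union>n. X closure_of N n)"
  proof
    fix x assume "x \<in> U"
    then obtain n where "x \<in> N n"
      using N(2) by blast
    moreover have "N n \<subseteq> topspace X"
      using N(1) by (simp add: nowhere_dense_in_def)
    ultimately show "x \<in> (\<Union>n. X closure_of N n)"
      using closure_of_subset by blast
  qed
  ultimately show ?thesis
    using interior_of_maximal[OF _ assms(3)] by blast
qed

lemma nowhere_dense_in_homeomorphic_image: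
  assumes f: "homeomorphic_map X Y f" and S: "nowhere_dense_in X S"
  shows "nowhere_dense_in Y (f ` S)"
proof -
  have "S \<subseteq> topspace X"
    using S by (simp add: nowhere_dense_in_def)
  then have "Y interior_of (Y closure_of (f ` S)) = f ` (X interior_of (X closure_of S))"
    by (simp add: homeomorphic_map_closure_of[OF f]
        homeomorphic_map_interior_of[OF f closure_of_subset_topspace])
  moreover have "f ` S \<subseteq> topspace Y"
    using \<open>S \<subseteq> topspace X\<close> homeomorphic_imp_surjective_map[OF f] by blast
  ultimately show ?thesis
    using S by (simp add: nowhere_dense_in_def)
qed

lemma meagre_in_homeomorphic_image:
  assumes f: "homeomorphic_map X Y f" and S: "meagre_in X S"
  shows "meagre_in Y (f ` S)"
proof -
  obtain N :: "nat \<Rightarrow> _" where N: "\<And>n. nowhere_dense_in X (N n)" "S \<subseteq> (\<Union>n. N n)"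
    using S unfolding meagre_in_def by blast
  have "f ` S \<subseteq> topspace Y"
    using S homeomorphic_imp_surjective_map[OF f] by (auto simp: meagre_in_def)
  moreover have "f ` S \<subseteq> (\<Union>n. f ` N n)"
    using N(2) by blast
  ultimately show ?thesis
    unfolding meagre_in_def
    by (intro conjI exI[of _ "\<lambda>n. f ` N n"] allI nowhere_dense_in_homeomorphic_image[OF f N(1)])
qed

lemma meagre_in_homeomorphic_preimage:
  assumes f: "homeomorphic_map X Y f" and S: "meagre_in Y S"
  shows "meagre_in X {x \<in> topspace X. f x \<in> S}"
proof -
  obtain g where "homeomorphic_maps X Y f g"
    using f homeomorphic_map_maps by blast
  then have g: "homeomorphic_map Y X g" "\<forall>x \<in> topspace X. g (f x) = x"
      "\<forall>y \<in> topspace Y. f (g y) = y"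
    by (simp_all add: homeomorphic_maps_map)
  have "S \<subseteq> topspace Y"
    using S by (simp add: meagre_in_def)
  have "{x \<in> topspace X. f x \<in> S} = g ` S"
  proof (intro equalityI subsetI)
    fix x assume "x \<in> {x \<in> topspace X. f x \<in> S}"
    then show "x \<in> g ` S"
      using g(2) by (metis (mono_tags, lifting) image_eqI mem_Collect_eq)
  next
    fix x assume "x \<in> g ` S"
    then show "x \<in> {x \<in> topspace X. f x \<in> S}"
      using g(3) \<open>S \<subseteq> topspace Y\<close> homeomorphic_imp_surjective_map[OF g(1)] by auto
  qed
  with g(1) S show ?thesis
    by (simp add: meagre_in_homeomorphic_image)
qed

lemma baire_property_in_homeomorphic_image:
  assumes f: "homeomorphic_map X Y f" and S: "baire_property_in X S"
  shows "baire_property_in Y (f ` S)"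
proof -
  obtain U where U: "openin X U" "meagre_in X (sym_diff S U)" and "S \<subseteq> topspace X"
    using S unfolding baire_property_in_def by blast
  moreover have "inj_on f (topspace X)"
    using f homeomorphic_imp_injective_map by blast
  ultimately have "sym_diff (f ` S) (f ` U) = f ` sym_diff S U"
    using openin_subset[OF U(1)] by (auto simp: inj_on_def)
  then have "meagre_in Y (sym_diff (f ` S) (f ` U))"
    using meagre_in_homeomorphic_image[OF f U(2)] by simp
  moreover have "openin Y (f ` U)"
    using homeomorphic_map_openness[OF f openin_subset[OF U(1)]] U(1) by simp
  moreover have "f ` S \<subseteq> topspace Y"
    using \<open>S \<subseteq> topspace X\<close> homeomorphic_imp_surjective_map[OF f] by blast
  ultimately show ?thesis
    unfolding baire_property_in_def by (intro conjI exI[of _ "f ` U"])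
qed

section \<open>The Cantor space\<close>

definition cantor_space :: "(nat \<Rightarrow> bool) topology" where
  "cantor_space = product_topology (\<lambda>_. discrete_topology UNIV) UNIV"

definition flip_at :: "nat \<Rightarrow> (nat \<Rightarrow> bool) \<Rightarrow> nat \<Rightarrow> bool" where
  "flip_at n w = w(n := \<not> w n)"

definition prefix_cylinder :: "nat \<Rightarrow> (nat \<Rightarrow> bool) \<Rightarrow> (nat \<Rightarrow> bool) set" where
  "prefix_cylinder N w = {v. \<forall>i<N. v i = w i}"

lemma flip_at_flip_at [simp]: "flip_at n (flip_at n w) = w"
  by (auto simp: flip_at_def)

lemma flip_at_apply: "flip_at n w i = (if i = n then \<not> w n else w i)"
  by (simp add: flip_at_def)

lemma topspace_cantor_space [simp]: "topspace cantor_space = UNIV"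
  by (simp add: cantor_space_def)

lemma prefix_cylinder_subset_if_openin:
  assumes "openin cantor_space U" "w \<in> U"
  obtains N where "prefix_cylinder N w \<subseteq> U"
proof -
  obtain V
    where V: "finite {i \<in> UNIV. V i \<noteq> topspace (discrete_topology (UNIV :: bool set))}"
      "w \<in> Pi\<^sub>E UNIV V" "Pi\<^sub>E UNIV V \<subseteq> U"
    using assms unfolding cantor_space_def openin_product_topology_alt by blast
  have "finite {i. V i \<noteq> UNIV}"
    using V(1) by simp
  then obtain N where N: "{i. V i \<noteq> UNIV} \<subseteq> {..<N}"
    using finite_nat_bounded by blast
  have "v \<in> Pi\<^sub>E UNIV V" if "v \<in> prefix_cylinder N w" for v
  proof -
    have "v i \<in> V i" for i
    proof (cases "i < N")
      case True
      then show ?thesis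
        using that V(2) by (simp add: prefix_cylinder_def PiE_iff)
    next
      case False
      then show ?thesis
        using N by auto
    qed
    then show ?thesis
      by (simp add: PiE_iff)
  qed
  with V(3) show ?thesis
    using that by blast
qed

lemma openin_cantor_space:
  "openin cantor_space U \<longleftrightarrow> (\<forall>w\<in>U. \<exists>N. prefix_cylinder N w \<subseteq> U)"
proof
  show "openin cantor_space U \<Longrightarrow> \<forall>w\<in>U. \<exists>N. prefix_cylinder N w \<subseteq> U"
    using prefix_cylinder_subset_if_openin by blast
next
  assume U: "\<forall>w\<in>U. \<exists>N. prefix_cylinder N w \<subseteq> U"
  show "openin cantor_space U"
    unfolding cantor_space_def openin_product_topology_alt
  proof
    fix w assume "w \<in> U"
    then obtain N where N: "prefix_cylinder N w \<subseteq> U"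
      using U by blast
    define V where "V i = (if i < N then {w i} else UNIV)" for i
    have "finite {i \<in> UNIV. V i \<noteq> topspace (discrete_topology UNIV)}"
      by (rule finite_subset[of _ "{..<N}"]) (auto simp: V_def)
    moreover have "Pi\<^sub>E UNIV V = prefix_cylinder N w"
      by (auto simp: V_def prefix_cylinder_def PiE_iff) (metis singletonD)+
    ultimately show "\<exists>V. finite {i \<in> UNIV. V i \<noteq> topspace (discrete_topology UNIV)} \<and>
        (\<forall>i\<in>UNIV. openin (discrete_topology UNIV) (V i)) \<and> w \<in> Pi\<^sub>E UNIV V \<and> Pi\<^sub>E UNIV V \<subseteq> U"
      using N by (intro exI[of _ V]) (auto simp: prefix_cylinder_def)
  qed
qed

lemma openin_prefix_cylinder: "openin cantor_space (prefix_cylinder N w)"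
proof -
  have "prefix_cylinder N v \<subseteq> prefix_cylinder N w" if "v \<in> prefix_cylinder N w" for v
    using that by (simp add: prefix_cylinder_def subset_iff)
  then show ?thesis
    unfolding openin_cantor_space by blast
qed

lemma homeomorphic_map_flip_at: "homeomorphic_map cantor_space cantor_space (flip_at n)"
proof -
  have "openin cantor_space {w. flip_at n w \<in> U}" if U: "openin cantor_space U" for U
    unfolding openin_cantor_space
  proof
    fix w assume "w \<in> {w. flip_at n w \<in> U}"
    then obtain N where N: "prefix_cylinder N (flip_at n w) \<subseteq> U"
      using U openin_cantor_space by blast
    have "flip_at n v \<in> prefix_cylinder N (flip_at n w)"
      if "v \<in> prefix_cylinder (max N (Suc n)) w" for v
      using that by (simp add: prefix_cylinder_def flip_at_apply)
    with N show "\<exists>N. prefix_cylinder N w \<subseteq> {w. flip_at n w \<in> U}"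
      by blast
  qed
  then have "continuous_map cantor_space cantor_space (flip_at n)"
    by (simp add: continuous_map_def)
  then show ?thesis
    using homeomorphic_maps_def homeomorphic_map_maps by fastforce
qed

lemma openin_cantor_space_coordinate: "openin cantor_space {v. v m = b}"
proof -
  have "prefix_cylinder (Suc m) v \<subseteq> {v. v m = b}" if "v m = b" for v
  proof
    fix u assume "u \<in> prefix_cylinder (Suc m) v"
    then have "u m = v m"
      unfolding prefix_cylinder_def using lessI by blast
    with that show "u \<in> {v. v m = b}"
      by simp
  qed
  then show ?thesis
    unfolding openin_cantor_space by blast
qed

lemma completely_metrizable_cantor_space: "completely_metrizable_space cantor_space"
  unfolding cantor_space_def
  by (subst completely_metrizable_space_product_topology)
     (simp add: completely_metrizable_space_discrete_topology)

lemma compact_cantor_space: "compact_space cantor_space"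
  unfolding cantor_space_def
  by (subst compact_space_product_topology) (simp add: compact_space_discrete_topology)

lemma nowhere_dense_eventually_true: "nowhere_dense_in cantor_space {w. \<forall>i\<ge>j. w i}"
proof -
  have "U = {}" if U: "openin cantor_space U" "U \<subseteq> cantor_space closure_of {w. \<forall>i\<ge>j. w i}" for U
  proof (rule ccontr)
    assume "U \<noteq> {}"
    then obtain w where "w \<in> U"
      by blast
    then obtain N where N: "prefix_cylinder N w \<subseteq> U"
      using U(1) openin_cantor_space by blast
    define m where "m = max N j"
    have "w(m := False) \<in> prefix_cylinder N w"
      by (simp add: prefix_cylinder_def m_def)
    then have in_closure: "w(m := False) \<in> cantor_space closure_of {w. \<forall>i\<ge>j. w i}"
      using N U(2) by blast
    have "\<exists>v. v \<in> {w. \<forall>i\<ge>j. w i} \<and> v \<in> {v. v m = False}"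
      using spec[OF conjunct2[OF in_closure[unfolded in_closure_of]], of "{v. v m = False}"]
        openin_cantor_space_coordinate[of m False] by simp
    moreover have "j \<le> m"
      by (simp add: m_def)
    ultimately show False
      by auto
  qed
  then show ?thesis
    by (simp add: nowhere_dense_in_def interior_of_eq_empty)
qed

definition flip_sparse :: "(nat \<Rightarrow> bool) set \<Rightarrow> bool" where
  "flip_sparse B \<longleftrightarrow> (\<forall>w\<in>B. finite {n. \<not> w n \<and> flip_at n w \<in> B})"

lemma meagre_in_flip_at_saturation:
  assumes "meagre_in cantor_space M"
  shows "meagre_in cantor_space (M \<union> (\<Union>n. flip_at n ` M) \<union> (\<Union>j. {w. \<forall>i\<ge>j. w i}))"
  by (intro meagre_in_Un meagre_in_UN assms nowhere_dense_imp_meagre_in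
      nowhere_dense_eventually_true meagre_in_homeomorphic_image[OF homeomorphic_map_flip_at])

lemma not_flip_sparse_if_flips_eventually_in:
  assumes "w \<in> B" "\<And>n. N \<le> n \<Longrightarrow> flip_at n w \<in> B" "\<And>j. \<exists>i\<ge>j. \<not> w i"
  shows "\<not> flip_sparse B"
proof -
  have "infinite {n. \<not> w n \<and> flip_at n w \<in> B}"
    unfolding infinite_nat_iff_unbounded_le
  proof
    fix m
    obtain i where "max m N \<le> i" "\<not> w i"
      using assms(3) by blast
    with assms(2) show "\<exists>i\<ge>m. i \<in> {n. \<not> w n \<and> flip_at n w \<in> B}"
      by auto
  qed
  with assms(1) show ?thesis
    unfolding flip_sparse_def by blast
qed

lemma meagre_in_if_flip_sparse:
  assumes "baire_property_in cantor_space B" "flip_sparse B"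
  shows "meagre_in cantor_space B"
proof -
  obtain U where U: "openin cantor_space U" and M: "meagre_in cantor_space (sym_diff B U)"
    using assms(1) unfolding baire_property_in_def by blast
  show ?thesis
  proof (cases "U = {}")
    case True
    with M show ?thesis
      by simp
  next
    case False
    then obtain w0 N where N: "prefix_cylinder N w0 \<subseteq> U"
      using U openin_cantor_space by blast
    txt \<open>A point of the cylinder outside the meagre set \<open>Bad\<close> lies in \<open>B\<close> together with all
      its flips at positions \<open>n \<ge> N\<close>, and infinitely many of its coordinates are \<open>False\<close>.\<close>
    define Bad where
      "Bad = sym_diff B U \<union> (\<Union>n. flip_at n ` sym_diff B U) \<union> (\<Union>j. {w. \<forall>i\<ge>j. w i})"
    have "meagre_in cantor_space Bad"
      unfolding Bad_def by (rule meagre_in_flip_at_saturation[OF M])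
    moreover have "w0 \<in> prefix_cylinder N w0"
      by (simp add: prefix_cylinder_def)
    ultimately obtain w where w: "w \<in> prefix_cylinder N w0" "w \<notin> Bad"
      using meagre_in_openin_empty[OF completely_metrizable_cantor_space _ openin_prefix_cylinder]
        meagre_in_subset by blast
    have "flip_at n w \<in> B" if "N \<le> n" for n
    proof -
      have "flip_at n w \<in> U"
        using w(1) N that by (auto simp: prefix_cylinder_def flip_at_apply)
      moreover have "w \<notin> flip_at n ` sym_diff B U"
        using w(2) unfolding Bad_def by blast
      then have "flip_at n w \<notin> sym_diff B U"
        by (metis flip_at_flip_at image_eqI)
      ultimately show ?thesis
        by blast
    qed
    moreover have "w \<in> B"
      using w N unfolding Bad_def by blast
    moreover have "\<exists>i\<ge>j. \<not> w i" for j
      using w(2) unfolding Bad_def by blast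
    ultimately show ?thesis
      using not_flip_sparse_if_flips_eventually_in assms(2) by blast
  qed
qed

lemma homeomorphic_map_pullback_topology:
  assumes "bij_betw f A (topspace T)"
  shows "homeomorphic_map (pullback_topology A f T) T f"
proof (rule bijective_open_imp_homeomorphic_map)
  show "continuous_map (pullback_topology A f T) T f"
    using continuous_map_pullback[OF continuous_map_id] by (simp add: o_def)
  have "topspace (pullback_topology A f T) = A"
    using assms by (auto simp: topspace_pullback_topology bij_betw_def)
  then show "f ` topspace (pullback_topology A f T) = topspace T"
    and "inj_on f (topspace (pullback_topology A f T))"
    using assms by (simp_all add: bij_betw_def)
  show "open_map (pullback_topology A f T) T f"
    unfolding open_map_def openin_pullback_topology
  proof clarify
    fix U assume "openin T U"
    moreover have "f ` (f -` U \<inter> A) = U \<inter> f ` A"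
      by blast
    ultimately show "openin T (f ` (f -` U \<inter> A))"
      using assms openin_subset by (fastforce simp: bij_betw_def Int_absorb2)
  qed
qed

lemma cantor_space_homeomorphic_real_topology:
  obtains K :: "real topology" and h
  where "compact_metric_space K" "homeomorphic_map K cantor_space h"
proof -
  obtain \<phi> :: "nat set \<Rightarrow> real" where "inj \<phi>"
    using nat_sets_lepoll_reals01 unfolding lepoll_def by blast
  define \<iota> where "\<iota> w = \<phi> {n. w n}" for w
  have "inj \<iota>"
    using \<open>inj \<phi>\<close> by (simp add: \<iota>_def inj_def Collect_inj)
  then have "bij_betw (inv \<iota>) (range \<iota>) (topspace cantor_space)"
    by (simp add: bij_betw_inv_into inj_on_imp_bij_betw)
  then have h:
    "homeomorphic_map (pullback_topology (range \<iota>) (inv \<iota>) cantor_space) cantor_space (inv \<iota>)"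
    by (rule homeomorphic_map_pullback_topology)
  then have "compact_metric_space (pullback_topology (range \<iota>) (inv \<iota>) cantor_space)"
    unfolding compact_metric_space_def
    using homeomorphic_map_imp_homeomorphic_space homeomorphic_compact_space
      homeomorphic_metrizable_space compact_cantor_space completely_metrizable_cantor_space
      completely_metrizable_imp_metrizable_space
    by metis
  with h show ?thesis
    using that by blast
qed

section \<open>The coin-tossing measure\<close>

definition fair_coin :: "bool measure" where
  "fair_coin = measure_pmf (bernoulli_pmf (1/2))"

definition coin_space :: "(nat \<Rightarrow> bool) measure" where
  "coin_space = PiM UNIV (\<lambda>_. fair_coin)"

lemma space_fair_coin [simp]: "space fair_coin = UNIV"
  and sets_fair_coin [simp]: "sets fair_coin = UNIV"
  by (simp_all add: fair_coin_def)

lemma space_coin_space [simp]: "space coin_space = UNIV"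
  by (simp add: coin_space_def space_PiM)

lemma prob_space_coin_space: "prob_space coin_space"
  unfolding coin_space_def fair_coin_def by (rule prob_space_PiM) (rule prob_space_measure_pmf)

interpretation coin: prob_space coin_space
  by (rule prob_space_coin_space)

lemma emeasure_fair_coin_vimage_Not: "emeasure fair_coin (Not -` A) = emeasure fair_coin A"
proof -
  have "card (Not -` A) = card A"
    by (rule card_vimage_inj) (auto simp: inj_def surj_def)
  then show ?thesis
    by (simp add: fair_coin_def emeasure_measure_pmf_finite)
qed

lemma sets_coin_space_coordinate: "{w. w i \<in> A} \<in> sets coin_space"
  using sets_Collect_single[of i UNIV A "\<lambda>_. fair_coin"] by (simp add: coin_space_def space_PiM)

lemma measurable_flip_at: "flip_at n \<in> coin_space \<rightarrow>\<^sub>M coin_space"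
  unfolding coin_space_def
proof (rule measurable_PiM_single)
  fix A i
  have "{w \<in> space (Pi\<^sub>M UNIV (\<lambda>_. fair_coin)). flip_at n w i \<in> A} =
      {w. w i \<in> (if i = n then Not -` A else A)}"
    by (auto simp: flip_at_apply space_PiM)
  then show "{w \<in> space (Pi\<^sub>M UNIV (\<lambda>_. fair_coin)). flip_at n w i \<in> A}
      \<in> sets (Pi\<^sub>M UNIV (\<lambda>_. fair_coin))"
    using sets_coin_space_coordinate unfolding coin_space_def by simp
qed simp

lemma sets_coin_space_flip_at_vimage: "E \<in> sets coin_space \<Longrightarrow> flip_at n -` E \<in> sets coin_space"
  using measurable_sets[OF measurable_flip_at] by simp

lemma distr_flip_at: "distr coin_space coin_space (flip_at n) = coin_space"
proof -
  let ?P = "Pi\<^sub>M (UNIV :: nat set) (\<lambda>_. fair_coin)"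
  have "?P = distr ?P ?P (flip_at n)"
  proof (rule measure_eqI_PiM_infinite)
    show "finite_measure ?P"
      using coin.finite_measure_axioms by (simp add: coin_space_def)
    fix A :: "nat \<Rightarrow> bool set" and J :: "nat set"
    assume J: "finite J" and A: "\<And>i. i \<in> J \<Longrightarrow> A i \<in> sets fair_coin"
    define A' where "A' j = (if j = n then Not -` A j else A j)" for j
    have "flip_at n -` prod_emb UNIV (\<lambda>_. fair_coin) J (Pi\<^sub>E J A) \<inter> space ?P
        = prod_emb UNIV (\<lambda>_. fair_coin) J (Pi\<^sub>E J A')"
      by (auto simp: prod_emb_def space_PiM PiE_iff A'_def flip_at_apply split: if_splits)
    then have "emeasure (distr ?P ?P (flip_at n)) (prod_emb UNIV (\<lambda>_. fair_coin) J (Pi\<^sub>E J A))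
        = emeasure ?P (prod_emb UNIV (\<lambda>_. fair_coin) J (Pi\<^sub>E J A'))"
      using measurable_flip_at J
      by (subst emeasure_distr) (auto simp: coin_space_def intro!: sets_PiM_I)
    also have "\<dots> = (\<Prod>i\<in>J. emeasure fair_coin (A' i))"
      by (rule emeasure_PiM_emb) (auto simp: J fair_coin_def intro: prob_space_measure_pmf)
    also have "\<dots> = (\<Prod>i\<in>J. emeasure fair_coin (A i))"
      by (rule prod.cong) (auto simp: A'_def emeasure_fair_coin_vimage_Not)
    also have "\<dots> = emeasure ?P (prod_emb UNIV (\<lambda>_. fair_coin) J (Pi\<^sub>E J A))"
      by (rule emeasure_PiM_emb[symmetric])
        (auto simp: J fair_coin_def intro: prob_space_measure_pmf)
    finally show "emeasure ?P (prod_emb UNIV (\<lambda>_. fair_coin) J (Pi\<^sub>E J A)) =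
        emeasure (distr ?P ?P (flip_at n)) (prod_emb UNIV (\<lambda>_. fair_coin) J (Pi\<^sub>E J A))"
      by simp
  qed simp_all
  then show ?thesis
    by (simp add: coin_space_def)
qed

lemma measure_flip_at_vimage:
  "E \<in> sets coin_space \<Longrightarrow> measure coin_space (flip_at n -` E) = measure coin_space E"
  using measure_distr[OF measurable_flip_at, of E n] by (simp add: distr_flip_at)

definition prefix_determined :: "nat \<Rightarrow> (nat \<Rightarrow> 'a) set \<Rightarrow> bool" where
  "prefix_determined N C \<longleftrightarrow> (\<forall>v w. (\<forall>i<N. v i = w i) \<longrightarrow> (v \<in> C \<longleftrightarrow> w \<in> C))"

definition cylinder_approximable :: "(nat \<Rightarrow> bool) set \<Rightarrow> bool" where
  "cylinder_approximable E \<longleftrightarrow>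
     (\<forall>e>0. \<exists>C N. C \<in> sets coin_space \<and> prefix_determined N C \<and>
        measure coin_space (sym_diff E C) < e)"

lemma prefix_determined_mono: "prefix_determined N C \<Longrightarrow> N \<le> M \<Longrightarrow> prefix_determined M C"
  unfolding prefix_determined_def by (meson less_le_trans)

lemma flip_at_vimage_prefix_determined:
  assumes "prefix_determined N C" "N \<le> n"
  shows "flip_at n -` C = C"
proof -
  have "\<forall>i<N. flip_at n w i = w i" for w
    using assms(2) by (simp add: flip_at_apply)
  then have "flip_at n w \<in> C \<longleftrightarrow> w \<in> C" for w
    using assms(1) unfolding prefix_determined_def by blast
  then show ?thesis
    by blast
qed

lemma (in finite_measure) measure_UN_Diff_lessThan_less:
  fixes A :: "nat \<Rightarrow> 'a set"
  assumes "range A \<subseteq> sets M" "0 < e"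
  obtains K where "measure M ((\<Union>i. A i) - (\<Union>i<K. A i)) < e"
proof -
  have "(\<lambda>K. measure M (\<Union>i<K. A i)) \<longlonglongrightarrow> measure M (\<Union>K. \<Union>i<K. A i)"
    using assms(1) by (intro finite_Lim_measure_incseq incseq_SucI) (auto simp: lessThan_Suc)
  moreover have "(\<Union>K. \<Union>i<K. A i) = (\<Union>i. A i)"
    by blast
  ultimately obtain K where "norm (measure M (\<Union>i<K. A i) - measure M (\<Union>i. A i)) < e"
    using LIMSEQ_D[of _ "measure M (\<Union>i. A i)" e] assms(2) by (metis order_refl)
  moreover have "(\<Union>i<K. A i) \<subseteq> (\<Union>i. A i)"
    by blast
  ultimately have "measure M ((\<Union>i. A i) - (\<Union>i<K. A i)) < e"
    using assms(1) by (subst finite_measure_Diff) auto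
  then show ?thesis
    using that by blast
qed

lemma cylinder_approximable_empty: "cylinder_approximable {}"
  unfolding cylinder_approximable_def prefix_determined_def by (intro allI impI exI[of _ "{}"]) auto

lemma cylinder_approximable_Compl:
  assumes "cylinder_approximable A"
  shows "cylinder_approximable (UNIV - A)"
  unfolding cylinder_approximable_def
proof (intro allI impI)
  fix e :: real assume "e > 0"
  then obtain C N where C: "C \<in> sets coin_space" "prefix_determined N C"
    "measure coin_space (sym_diff A C) < e"
    using assms unfolding cylinder_approximable_def by blast
  have "sym_diff (UNIV - A) (UNIV - C) = sym_diff A C"
    by blast
  moreover have "prefix_determined N (UNIV - C)"
    using C(2) unfolding prefix_determined_def by blast
  ultimately show "\<exists>C N. C \<in> sets coin_space \<and> prefix_determined N C \<and>
      measure coin_space (sym_diff (UNIV - A) C) < e"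
    using C(1,3) sets.compl_sets[OF C(1)] by (intro exI[of _ "UNIV - C"] exI[of _ N]) auto
qed

lemma cylinder_approximable_Un:
  assumes "A \<in> sets coin_space" "B \<in> sets coin_space"
    and "cylinder_approximable A" "cylinder_approximable B"
  shows "cylinder_approximable (A \<union> B)"
  unfolding cylinder_approximable_def
proof (intro allI impI)
  fix e :: real assume "e > 0"
  then obtain C M D N where C: "C \<in> sets coin_space" "prefix_determined M C"
      "measure coin_space (sym_diff A C) < e/2"
    and D: "D \<in> sets coin_space" "prefix_determined N D" "measure coin_space (sym_diff B D) < e/2"
    using assms(3,4) unfolding cylinder_approximable_def by (meson half_gt_zero)
  have "prefix_determined (max M N) C" "prefix_determined (max M N) D"
    using C(2) D(2) by (auto intro: prefix_determined_mono)
  then have "prefix_determined (max M N) (C \<union> D)"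
    unfolding prefix_determined_def by blast
  moreover have "sym_diff (A \<union> B) (C \<union> D) \<subseteq> sym_diff A C \<union> sym_diff B D"
    by blast
  then have "measure coin_space (sym_diff (A \<union> B) (C \<union> D))
      \<le> measure coin_space (sym_diff A C) + measure coin_space (sym_diff B D)"
    using assms(1,2) C(1) D(1)
    by (intro order_trans[OF coin.finite_measure_mono measure_subadditive])
      (auto simp: coin.emeasure_finite)
  moreover have "C \<union> D \<in> sets coin_space"
    using C(1) D(1) by simp
  ultimately show "\<exists>C N. C \<in> sets coin_space \<and> prefix_determined N C \<and>
      measure coin_space (sym_diff (A \<union> B) C) < e"
    using C(3) D(3) by (intro exI[of _ "C \<union> D"] exI[of _ "max M N"]) auto
qed

lemma cylinder_approximable_UN:
  fixes A :: "nat \<Rightarrow> (nat \<Rightarrow> bool) set"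
  assumes A: "\<And>i. A i \<in> sets coin_space" "\<And>i. cylinder_approximable (A i)"
  shows "cylinder_approximable (\<Union>i. A i)"
  unfolding cylinder_approximable_def
proof (intro allI impI)
  fix e :: real assume "e > 0"
  obtain K where K: "measure coin_space ((\<Union>i. A i) - (\<Union>i<K. A i)) < e/2"
    using coin.measure_UN_Diff_lessThan_less[of A "e/2"] A(1) \<open>e > 0\<close> by auto
  have "cylinder_approximable (\<Union>i<K. A i)"
  proof (induction K)
    case (Suc K)
    then show ?case
      using A by (simp add: lessThan_Suc cylinder_approximable_Un sets.finite_UN)
  qed (simp add: cylinder_approximable_empty)
  then obtain C N where C: "C \<in> sets coin_space" "prefix_determined N C"
    "measure coin_space (sym_diff (\<Union>i<K. A i) C) < e/2"
    using \<open>e > 0\<close> unfolding cylinder_approximable_def by (meson half_gt_zero)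
  have "sym_diff (\<Union>i. A i) C \<subseteq> ((\<Union>i. A i) - (\<Union>i<K. A i)) \<union> sym_diff (\<Union>i<K. A i) C"
    by blast
  then have "measure coin_space (sym_diff (\<Union>i. A i) C)
      \<le> measure coin_space ((\<Union>i. A i) - (\<Union>i<K. A i)) + measure coin_space (sym_diff (\<Union>i<K. A i) C)"
    using A(1) C(1)
    by (intro order_trans[OF coin.finite_measure_mono measure_subadditive])
      (auto simp: coin.emeasure_finite)
  with C K show "\<exists>C N. C \<in> sets coin_space \<and> prefix_determined N C \<and>
      measure coin_space (sym_diff (\<Union>i. A i) C) < e"
    by (intro exI[of _ C] exI[of _ N]) auto
qed

lemma cylinder_approximable_sets:
  assumes "E \<in> sets coin_space"
  shows "cylinder_approximable E"
proof -
  have E: "E \<in> sigma_sets (\<Pi>\<^sub>E i\<in>UNIV. space fair_coin) (prod_algebra UNIV (\<lambda>_. fair_coin))"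
    using assms by (simp add: coin_space_def sets_PiM)
  show ?thesis
    using E
  proof (induct rule: sigma_sets_induct_disjoint[OF Int_stable_prod_algebra
        prod_algebra_sets_into_space, consumes 1, case_names basic empty compl union])
    case (basic A)
    then obtain J X where A: "A = prod_emb UNIV (\<lambda>_. fair_coin) J (\<Pi>\<^sub>E j\<in>J. X j)" "finite J"
      by (auto elim!: prod_algebraE)
    obtain N where "J \<subseteq> {..<N}"
      using finite_nat_bounded[OF A(2)] by blast
    then have "prefix_determined N A"
      unfolding prefix_determined_def A(1) by (fastforce simp: prod_emb_def PiE_iff)
    moreover have "A \<in> sets coin_space"
      using basic by (simp add: coin_space_def sets_PiM sigma_sets.Basic)
    ultimately show ?case
      unfolding cylinder_approximable_def by (intro allI impI exI[of _ A] exI[of _ N]) auto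
  next
    case empty
    show ?case
      by (rule cylinder_approximable_empty)
  next
    case (compl A)
    then show ?case
      by (simp add: cylinder_approximable_Compl)
  next
    case (union A)
    then show ?case
      by (intro cylinder_approximable_UN)
        (auto simp: coin_space_def sets_PiM simp del: space_fair_coin)
  qed
qed

lemma (in finite_measure) ex_in_infinitely_many_if_measure_ge:
  fixes G :: "nat \<Rightarrow> 'a set"
  assumes G: "\<And>n. G n \<in> sets M" and ge: "\<And>n. N \<le> n \<Longrightarrow> c \<le> measure M (G n)" and "0 < c"
  shows "\<exists>w. infinite {n. w \<in> G n}"
proof -
  define L where "L j = (\<Union>m\<in>{j..}. G m)" for j
  have L: "range L \<subseteq> sets M"
    using G by (auto simp: L_def)
  have "decseq L"
    unfolding L_def decseq_def by (intro allI impI UN_mono) auto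
  with L have "(\<lambda>j. measure M (L j)) \<longlonglongrightarrow> measure M (\<Inter>j. L j)"
    by (rule finite_Lim_measure_decseq)
  moreover have "c \<le> measure M (L j)" for j
  proof -
    have "G (max j N) \<subseteq> L j"
      unfolding L_def by (intro UN_upper) simp
    then have "measure M (G (max j N)) \<le> measure M (L j)"
      using L by (intro finite_measure_mono) auto
    with ge[of "max j N"] show ?thesis
      by simp
  qed
  ultimately have "c \<le> measure M (\<Inter>j. L j)"
    by (intro LIMSEQ_le_const) auto
  with \<open>0 < c\<close> have "(\<Inter>j. L j) \<noteq> {}"
    by auto
  then obtain w where "\<And>j. w \<in> L j"
    by blast
  then have "\<exists>m\<ge>j. w \<in> G m" for j
    by (auto simp: L_def)
  then have "infinite {n. w \<in> G n}"
    unfolding infinite_nat_iff_unbounded_le by simp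
  then show ?thesis
    by blast
qed

lemma measure_upward_flips:
  assumes E: "E \<in> sets coin_space"
  shows "measure coin_space {w \<in> E. \<not> w n \<and> flip_at n w \<in> E} =
    measure coin_space (E \<inter> flip_at n -` E) / 2"
proof -
  define D where "D = E \<inter> flip_at n -` E"
  define D' where "D' b = D \<inter> {w. w n = b}" for b
  have D: "D \<in> sets coin_space"
    unfolding D_def using E sets_coin_space_flip_at_vimage[OF E] by (rule sets.Int)
  have D': "D' b \<in> sets coin_space" for b
    using sets.Int[OF D sets_coin_space_coordinate[of n "{b}"]] by (simp add: D'_def)
  have "flip_at n -` D' False = D' True"
    by (auto simp: D'_def D_def flip_at_apply)
  then have "measure coin_space (D' True) = measure coin_space (D' False)"
    using measure_flip_at_vimage[OF D', of n False] by simp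
  moreover have "D = D' False \<union> D' True" "D' False \<inter> D' True = {}"
    by (auto simp: D'_def)
  then have "measure coin_space D = measure coin_space (D' False) + measure coin_space (D' True)"
    using coin.finite_measure_Union[OF D' D'] by simp
  moreover have "{w \<in> E. \<not> w n \<and> flip_at n w \<in> E} = D' False"
    by (auto simp: D'_def D_def)
  ultimately show ?thesis
    by (simp add: D_def)
qed

lemma measure_Int_flip_at_vimage_ge:
  assumes E: "E \<in> sets coin_space" and "0 < e"
  obtains N where "\<And>n. N \<le> n \<Longrightarrow> measure coin_space E - e < measure coin_space (E \<inter> flip_at n -` E)"
proof -
  obtain C N where C: "C \<in> sets coin_space" "prefix_determined N C"
    "measure coin_space (sym_diff E C) < e"
    using cylinder_approximable_sets[OF E] \<open>0 < e\<close> unfolding cylinder_approximable_def by blast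
  have "measure coin_space E - e < measure coin_space (E \<inter> flip_at n -` E)" if "N \<le> n" for n
  proof -
    have "E - flip_at n -` E \<subseteq> (E - C) \<union> flip_at n -` (C - E)"
      using flip_at_vimage_prefix_determined[OF C(2) that] by blast
    then have "measure coin_space (E - flip_at n -` E)
        \<le> measure coin_space ((E - C) \<union> flip_at n -` (C - E))"
      using E C(1) by (intro coin.finite_measure_mono) (auto intro: sets_coin_space_flip_at_vimage)
    also have "\<dots> \<le> measure coin_space (E - C) + measure coin_space (flip_at n -` (C - E))"
      using E C(1) by (intro measure_subadditive)
        (auto intro: sets_coin_space_flip_at_vimage simp: coin.emeasure_finite)
    also have "\<dots> = measure coin_space (sym_diff E C)"
      using E C(1) coin.finite_measure_Union[of "E - C" "C - E"]
      by (simp add: measure_flip_at_vimage Diff_Int_distrib2 Diff_disjoint)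
    finally show ?thesis
      using C(3) coin.finite_measure_Diff'[OF E sets_coin_space_flip_at_vimage[OF E], of n]
      by linarith
  qed
  then show ?thesis
    using that by blast
qed

lemma coin_space_null_if_flip_sparse:
  assumes E: "E \<in> sets coin_space" and "flip_sparse E"
  shows "measure coin_space E = 0"
proof (rule ccontr)
  assume "measure coin_space E \<noteq> 0"
  then have pos: "0 < measure coin_space E"
    using measure_nonneg[of coin_space E] by linarith
  define G where "G n = {w \<in> E. \<not> w n \<and> flip_at n w \<in> E}" for n
  have G: "G n \<in> sets coin_space" for n
  proof -
    have "G n = (E \<inter> flip_at n -` E) \<inter> {w. w n \<in> {False}}"
      by (auto simp: G_def)
    then show ?thesis
      using sets.Int[OF sets.Int[OF E sets_coin_space_flip_at_vimage[OF E]]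
          sets_coin_space_coordinate]
      by presburger
  qed
  obtain N where N: "\<And>n. N \<le> n \<Longrightarrow> measure coin_space E / 2 < measure coin_space (E \<inter> flip_at n -` E)"
    using measure_Int_flip_at_vimage_ge[OF E, of "measure coin_space E / 2"] pos by auto
  have bound: "measure coin_space E / 4 \<le> measure coin_space (G n)" if "N \<le> n" for n
  proof -
    have "measure coin_space (G n) = measure coin_space (E \<inter> flip_at n -` E) / 2"
      unfolding G_def by (rule measure_upward_flips[OF E])
    with N[OF that] show ?thesis
      by simp
  qed
  moreover have "0 < measure coin_space E / 4"
    using pos by simp
  ultimately obtain w where w: "infinite {n. w \<in> G n}"
    using coin.ex_in_infinitely_many_if_measure_ge[of G N, OF G bound] by blast
  then obtain n where "w \<in> G n"
    using not_finite_existsD by blast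
  then have "w \<in> E"
    by (simp add: G_def)
  moreover have "{n. w \<in> G n} = {n. \<not> w n \<and> flip_at n w \<in> E}"
    using \<open>w \<in> E\<close> by (simp add: G_def)
  ultimately show False
    using w \<open>flip_sparse E\<close> unfolding flip_sparse_def by simp
qed

section \<open>Subseries sums of a fast null sequence\<close>

lemma invariant_metricD:
  "invariant_metric TYPE('a) \<Longrightarrow> dist (a + c) (b + c) = dist a (b::'a::{ab_group_add, metric_space})"
  unfolding invariant_metric_def by blast

lemma tendsto_add_const_invariant:
  fixes f :: "'b \<Rightarrow> 'a::{ab_group_add, metric_space}"
  assumes "invariant_metric TYPE('a)" "(f \<longlongrightarrow> l) F"
  shows "((\<lambda>y. f y + c) \<longlongrightarrow> l + c) F"
  using assms(2) by (simp add: tendsto_iff invariant_metricD[OF assms(1)])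

lemma continuous_on_add_const_invariant:
  "invariant_metric TYPE('a) \<Longrightarrow> continuous_on UNIV (\<lambda>v::'a::{ab_group_add, metric_space}. v + c)"
  unfolding continuous_on_def by (auto intro: tendsto_add_const_invariant tendsto_ident_at)

lemma borel_measurable_diff_const_invariant:
  "invariant_metric TYPE('a) \<Longrightarrow>
    (\<lambda>v::'a::{ab_group_add, metric_space}. v - z) \<in> borel_measurable borel"
  using borel_measurable_continuous_onI[OF continuous_on_add_const_invariant, of "- z"] by simp

lemma mem_translate: "v \<in> translate A z \<longleftrightarrow> v - z \<in> A"
proof
  show "v \<in> translate A z \<Longrightarrow> v - z \<in> A"
    unfolding translate_def by auto
  show "v - z \<in> A \<Longrightarrow> v \<in> translate A z"
    unfolding translate_def by (rule image_eqI[of _ _ "v - z"]) simp_all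
qed

definition subseries_partial_sum :: "(nat \<Rightarrow> 'a::ab_group_add) \<Rightarrow> (nat \<Rightarrow> bool) \<Rightarrow> nat \<Rightarrow> 'a" where
  "subseries_partial_sum x w N = (\<Sum>n<N. if w n then x n else 0)"

text \<open>\<open>lim\<close> is unspecified for divergent sequences; below, convergence of the partial sums is
  proved for fast null sequences in a complete group with invariant metric.\<close>

definition subseries_sum :: "(nat \<Rightarrow> 'a::{ab_group_add, metric_space}) \<Rightarrow> (nat \<Rightarrow> bool) \<Rightarrow> 'a" where
  "subseries_sum x w = lim (subseries_partial_sum x w)"

lemma subseries_partial_sum_Suc:
  "subseries_partial_sum x w (Suc N) = subseries_partial_sum x w N + (if w N then x N else 0)"
  by (simp add: subseries_partial_sum_def)

lemma subseries_partial_sum_prefix_cong: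
  "v \<in> prefix_cylinder N w \<Longrightarrow> subseries_partial_sum x v N = subseries_partial_sum x w N"
  unfolding subseries_partial_sum_def prefix_cylinder_def by (rule sum.cong) auto

lemma subseries_partial_sum_flip_at:
  assumes "\<not> w n" "n < N"
  shows "subseries_partial_sum x (flip_at n w) N = subseries_partial_sum x w N + x n"
proof -
  let ?f = "\<lambda>i. if w i then x i else 0"
  let ?g = "\<lambda>i. if flip_at n w i then x i else 0"
  have n: "n \<in> {..<N}"
    using assms(2) by simp
  have "sum ?g ({..<N} - {n}) = sum ?f ({..<N} - {n})"
    by (rule sum.cong) (auto simp: flip_at_apply)
  moreover have "?g n = x n" "?f n = 0"
    using assms(1) by (simp_all add: flip_at_apply)
  ultimately show ?thesis
    unfolding subseries_partial_sum_def
    using sum.remove[OF finite_lessThan n, of ?f] sum.remove[OF finite_lessThan n, of ?g]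
    by (simp add: add.commute)
qed

context
  fixes x :: "nat \<Rightarrow> 'a::{ab_group_add, metric_space, complete_space}"
  assumes invariant: "invariant_metric TYPE('a)"
    and small: "\<And>n. dist (x n) 0 \<le> (1/2)^n"
begin

lemma dist_subseries_partial_sums:
  "N \<le> M \<Longrightarrow>
    dist (subseries_partial_sum x w M) (subseries_partial_sum x w N) \<le> 2 * (1/2)^N - 2 * (1/2)^M"
proof (induction M rule: dec_induct)
  case (step M)
  have "dist (subseries_partial_sum x w (Suc M)) (subseries_partial_sum x w M) =
      dist (if w M then x M else 0) 0"
    using invariant_metricD[OF invariant, of "if w M then x M else 0"
        "subseries_partial_sum x w M" 0]
    by (simp add: subseries_partial_sum_Suc add.commute)
  also have "\<dots> \<le> (1/2)^M"
    using small by simp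
  finally show ?case
    using step.IH dist_triangle[of "subseries_partial_sum x w (Suc M)" "subseries_partial_sum x w N"
        "subseries_partial_sum x w M"] by simp
qed simp

lemma dist_subseries_partial_sums_le:
  "N \<le> M \<Longrightarrow> dist (subseries_partial_sum x w M) (subseries_partial_sum x w N) \<le> 2 * (1/2)^N"
  using dist_subseries_partial_sums[of N M w] zero_le_power[of "1/2::real" M] by linarith

lemma subseries_partial_sum_tendsto: "subseries_partial_sum x w \<longlonglongrightarrow> subseries_sum x w"
proof -
  have "Cauchy (subseries_partial_sum x w)"
    unfolding Cauchy_altdef2
  proof (intro allI impI)
    fix e :: real assume "e > 0"
    then obtain N where N: "(1/2::real)^N < e/2"
      using real_arch_pow_inv[of "e/2" "1/2"] by auto
    show "\<exists>N. \<forall>n\<ge>N. dist (subseries_partial_sum x w n) (subseries_partial_sum x w N) < e"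
    proof (intro exI[of _ N] allI impI)
      fix n assume "N \<le> n"
      with N show "dist (subseries_partial_sum x w n) (subseries_partial_sum x w N) < e"
        using dist_subseries_partial_sums_le[of N n w] by linarith
    qed
  qed
  then show ?thesis
    unfolding subseries_sum_def using Cauchy_convergent convergent_LIMSEQ_iff by blast
qed

lemma dist_subseries_sum_partial_sum:
  "dist (subseries_sum x w) (subseries_partial_sum x w N) \<le> 2 * (1/2)^N"
proof -
  have "(\<lambda>M. dist (subseries_partial_sum x w M) (subseries_partial_sum x w N)) \<longlonglongrightarrow>
      dist (subseries_sum x w) (subseries_partial_sum x w N)"
    by (intro tendsto_dist subseries_partial_sum_tendsto tendsto_const)
  then show ?thesis
    by (rule Lim_bounded[where M = N]) (simp add: dist_subseries_partial_sums_le)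
qed

lemma continuous_map_subseries_sum: "continuous_map cantor_space euclidean (subseries_sum x)"
  unfolding continuous_map_def
proof (intro conjI allI impI)
  fix U :: "'a set" assume "openin euclidean U"
  show "openin cantor_space {w \<in> topspace cantor_space. subseries_sum x w \<in> U}"
    unfolding openin_cantor_space
  proof
    fix w assume "w \<in> {w \<in> topspace cantor_space. subseries_sum x w \<in> U}"
    then obtain e where "e > 0" and e: "ball (subseries_sum x w) e \<subseteq> U"
      using \<open>openin euclidean U\<close> open_contains_ball by force
    then obtain N where N: "(1/2::real)^N < e/4"
      using real_arch_pow_inv[of "e/4" "1/2"] by auto
    have "subseries_sum x v \<in> U" if "v \<in> prefix_cylinder N w" for v
    proof -
      have "dist (subseries_sum x v) (subseries_partial_sum x w N) \<le> 2 * (1/2)^N"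
        using dist_subseries_sum_partial_sum[of v N]
          subseries_partial_sum_prefix_cong[OF that, of x] by simp
      then have "dist (subseries_sum x w) (subseries_sum x v) \<le> 2 * (1/2)^N + 2 * (1/2)^N"
        using dist_subseries_sum_partial_sum[of w N]
          dist_triangle2[of "subseries_sum x w" "subseries_sum x v" "subseries_partial_sum x w N"]
        by linarith
      with N e show ?thesis
        by auto
    qed
    then show "\<exists>N. prefix_cylinder N w \<subseteq> {w \<in> topspace cantor_space. subseries_sum x w \<in> U}"
      by auto
  qed
qed simp

lemma subseries_sum_flip_at:
  assumes "\<not> w n"
  shows "subseries_sum x (flip_at n w) = subseries_sum x w + x n"
proof (rule LIMSEQ_unique)
  show "subseries_partial_sum x (flip_at n w) \<longlonglongrightarrow> subseries_sum x (flip_at n w)"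
    by (rule subseries_partial_sum_tendsto)
  have "\<forall>\<^sub>F N in sequentially.
      subseries_partial_sum x w N + x n = subseries_partial_sum x (flip_at n w) N"
    using eventually_gt_at_top[of n]
    by eventually_elim (simp add: subseries_partial_sum_flip_at[of w n _ x] assms)
  then show "subseries_partial_sum x (flip_at n w) \<longlonglongrightarrow> subseries_sum x w + x n"
    by (rule Lim_transform_eventually
        [OF tendsto_add_const_invariant[OF invariant subseries_partial_sum_tendsto]])
qed

lemma borel_measurable_subseries_sum: "subseries_sum x \<in> borel_measurable coin_space"
proof -
  have "(\<lambda>w. subseries_partial_sum x w N) \<in> borel_measurable coin_space" for N
  proof (induction N)
    case 0
    then show ?case
      by (simp add: subseries_partial_sum_def)
  next
    case (Suc N)
    have add: "(\<lambda>w. subseries_partial_sum x w N + x N) \<in> borel_measurable coin_space"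
      using Suc.IH
        borel_measurable_continuous_onI[OF continuous_on_add_const_invariant[OF invariant]]
      by (rule measurable_compose)
    have coord: "{w \<in> space coin_space. w N} \<in> sets coin_space"
      using sets_coin_space_coordinate[of N "{True}"] by simp
    have "(\<lambda>w. subseries_partial_sum x w (Suc N)) =
        (\<lambda>w. if w N then subseries_partial_sum x w N + x N else subseries_partial_sum x w N)"
      by (simp add: subseries_partial_sum_Suc fun_eq_iff)
    then show ?case
      using measurable_If[OF add Suc.IH coord] by simp
  qed
  then show ?thesis
    by (rule borel_measurable_LIMSEQ_metric) (rule subseries_partial_sum_tendsto)
qed

lemma borel_measurable_subseries_sum_diff:
  "(\<lambda>w. subseries_sum x w - z) \<in> borel_measurable coin_space"
  using borel_measurable_subseries_sum borel_measurable_diff_const_invariant[OF invariant]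
  by (rule measurable_compose)

context
  fixes A :: "'a set"
  assumes finite_in_translates: "\<And>y. finite {n. y + x n \<in> A}"
begin

lemma flip_sparse_subseries_sum_preimage:
  assumes "S \<subseteq> A"
  shows "flip_sparse {w. subseries_sum x w - z \<in> S}"
  unfolding flip_sparse_def
proof
  fix w assume "w \<in> {w. subseries_sum x w - z \<in> S}"
  have "{n. \<not> w n \<and> flip_at n w \<in> {w. subseries_sum x w - z \<in> S}} \<subseteq>
      {n. (subseries_sum x w - z) + x n \<in> A}"
    using subseries_sum_flip_at assms by (auto simp: algebra_simps)
  then show "finite {n. \<not> w n \<and> flip_at n w \<in> {w. subseries_sum x w - z \<in> S}}"
    using finite_in_translates finite_subset by blast
qed

lemma Haar_meagre_if_finite_in_translates:
  assumes A: "universally_Baire A"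
  shows "Haar_meagre A"
proof -
  obtain K :: "real topology" and h
    where K: "compact_metric_space K" and h: "homeomorphic_map K cantor_space h"
    using cantor_space_homeomorphic_real_topology by blast
  define g where "g = subseries_sum x \<circ> h"
  have g: "continuous_map K euclidean g"
    unfolding g_def
    using continuous_map_compose[OF homeomorphic_imp_continuous_map[OF h]
        continuous_map_subseries_sum] .
  have h_onto: "h ` topspace K = UNIV"
    using homeomorphic_imp_surjective_map[OF h] by simp
  have "meagre_in K {k \<in> topspace K. g k \<in> translate A z}" for z
  proof -
    define B where "B = {w. subseries_sum x w - z \<in> A}"
    have pre: "{k \<in> topspace K. g k \<in> translate A z} = {k \<in> topspace K. h k \<in> B}"
      by (simp add: g_def B_def mem_translate)
    have "baire_property_in K {k \<in> topspace K. g k \<in> translate A z}"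
      using A K g unfolding universally_Baire_def by blast
    then have "baire_property_in cantor_space (h ` {k \<in> topspace K. h k \<in> B})"
      unfolding pre by (rule baire_property_in_homeomorphic_image[OF h])
    moreover have "h ` {k \<in> topspace K. h k \<in> B} = B"
    proof (rule subset_antisym)
      show "B \<subseteq> h ` {k \<in> topspace K. h k \<in> B}"
      proof
        fix b assume "b \<in> B"
        moreover obtain k where "k \<in> topspace K" "b = h k"
          using h_onto by (metis UNIV_I imageE)
        ultimately show "b \<in> h ` {k \<in> topspace K. h k \<in> B}"
          by blast
      qed
    qed blast
    moreover have "flip_sparse B"
      unfolding B_def by (rule flip_sparse_subseries_sum_preimage) simp
    ultimately have "meagre_in cantor_space B"
      using meagre_in_if_flip_sparse by simp
    then show ?thesis
      unfolding pre by (rule meagre_in_homeomorphic_preimage[OF h])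
  qed
  moreover have "topspace K \<noteq> {}"
    using h_onto by auto
  ultimately show ?thesis
    unfolding Haar_meagre_def using A K g by (intro conjI exI[of _ K] exI[of _ g]) auto
qed

lemma null_sets_distr_subseries_sum_diff:
  assumes "S \<in> sets borel" "S \<subseteq> A"
  shows "S \<in> null_sets (distr coin_space borel (\<lambda>w. subseries_sum x w - z))"
proof -
  have "{w. subseries_sum x w - z \<in> S} \<in> sets coin_space"
    using measurable_sets[OF borel_measurable_subseries_sum_diff assms(1)] by (simp add: vimage_def)
  moreover have "flip_sparse {w. subseries_sum x w - z \<in> S}"
    using assms(2) by (rule flip_sparse_subseries_sum_preimage)
  ultimately have "emeasure coin_space {w. subseries_sum x w - z \<in> S} = 0"
    using coin_space_null_if_flip_sparse by (simp add: coin.emeasure_eq_measure)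
  with assms(1) show ?thesis
    by (simp add: null_sets_def emeasure_distr[OF borel_measurable_subseries_sum_diff] vimage_def)
qed

lemma Haar_null_if_finite_in_translates:
  assumes A: "universally_measurable A"
  shows "Haar_null A"
proof -
  define \<mu> where "\<mu> = distr coin_space borel (subseries_sum x)"
  have "translate A z \<in> null_sets (completion \<mu>)" for z
  proof -
    define \<mu>z where "\<mu>z = distr coin_space borel (\<lambda>w. subseries_sum x w - z)"
    have "borel_prob \<mu>z"
      unfolding borel_prob_def \<mu>z_def
      using coin.prob_space_distr[OF borel_measurable_subseries_sum_diff] by simp
    then have "A \<in> sets (completion \<mu>z)"
      using A unfolding universally_measurable_def by blast
    then obtain S N N' where S: "A = S \<union> N" "N \<subseteq> N'" "N' \<in> null_sets \<mu>z" "S \<in> sets \<mu>z"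
      by (rule sets_completionE)
    have "S \<union> N' \<in> null_sets \<mu>z"
      using S null_sets_distr_subseries_sum_diff[of S z]
      by (intro null_sets.Un) (auto simp: \<mu>z_def)
    then have null: "emeasure \<mu>z (S \<union> N') = 0" and borel: "S \<union> N' \<in> sets borel"
      by (auto simp: \<mu>z_def null_sets_def)
    have "emeasure \<mu> ((\<lambda>v. v - z) -` (S \<union> N')) = emeasure \<mu>z (S \<union> N')"
      using emeasure_distr[OF borel_measurable_subseries_sum]
        emeasure_distr[OF borel_measurable_subseries_sum_diff borel]
        measurable_sets[OF borel_measurable_diff_const_invariant[OF invariant] borel]
      by (simp add: \<mu>_def \<mu>z_def vimage_def)
    then have "(\<lambda>v. v - z) -` (S \<union> N') \<in> null_sets \<mu>"
      using null measurable_sets[OF borel_measurable_diff_const_invariant[OF invariant] borel]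
      by (simp add: \<mu>_def null_sets_def)
    moreover have "translate A z \<subseteq> (\<lambda>v. v - z) -` (S \<union> N')"
      using S(1,2) by (auto simp: mem_translate)
    ultimately show ?thesis
      using null_sets_completion_iff2 by blast
  qed
  moreover have "borel_prob \<mu>"
    unfolding borel_prob_def \<mu>_def
    using coin.prob_space_distr[OF borel_measurable_subseries_sum] by simp
  ultimately show ?thesis
    unfolding Haar_null_def using A by blast
qed

end

end

section \<open>Subadditive functions\<close>

lemma subadditive_sum_le:
  fixes f :: "'a::comm_monoid_add \<Rightarrow> real" and k :: nat
  assumes "subadditive f"
  shows "f (\<Sum>i<k. t i) \<le> f 0 + (\<Sum>i<k. f (t i))"
proof (induction k)
  case (Suc k)
  have "f (\<Sum>i<Suc k. t i) \<le> f (\<Sum>i<k. t i) + f (t k)"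
    using assms unfolding subadditive_def by simp
  with Suc.IH show ?case
    by simp
qed simp

lemma subadditive_bdd_above_kfold_sum:
  assumes "subadditive f" "bdd_above (f ` T)"
  shows "bdd_above (f ` kfold_sum k T)"
proof -
  obtain M where M: "\<And>t. t \<in> T \<Longrightarrow> f t \<le> M"
    using assms(2) by (auto simp: bdd_above_def)
  have "f a \<le> f 0 + real k * M" if a: "a \<in> kfold_sum k T" for a
  proof -
    obtain t where t: "a = (\<Sum>i<k. t i)" "\<forall>i<k. t i \<in> T"
      using a unfolding kfold_sum_def by blast
    have "(\<Sum>i<k. f (t i)) \<le> (\<Sum>i<k. M)"
      using M t(2) by (intro sum_mono) simp
    then show ?thesis
      using subadditive_sum_le[OF assms(1), of t k] t(1) by simp
  qed
  then show ?thesis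
    by (intro bdd_aboveI2)
qed

lemma subadditive_locally_bounded_if_bdd_above_ball:
  fixes f :: "'a::{ab_group_add, metric_space} \<Rightarrow> real"
  assumes "invariant_metric TYPE('a)" "subadditive f" "0 < r" "bdd_above (f ` ball 0 r)"
  shows "locally_bounded_at f p"
proof -
  obtain C where "\<forall>z \<in> f ` ball 0 r. z \<le> C"
    using assms(4) unfolding bdd_above_def by blast
  then have C: "f v \<le> C" if "dist 0 v < r" for v
    using that by simp
  have "\<bar>f y\<bar> \<le> \<bar>f p\<bar> + \<bar>C\<bar>" if "y \<in> ball p r" for y
  proof -
    have "dist 0 (y - p) < r" "dist 0 (p - y) < r"
      using that invariant_metricD[OF assms(1), of 0 p "y - p"]
        invariant_metricD[OF assms(1), of 0 y "p - y"]
      by (simp_all add: dist_commute)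
    then have "f (y - p) \<le> C" "f (p - y) \<le> C"
      by (simp_all add: C)
    moreover have "f y \<le> f p + f (y - p)" "f p \<le> f y + f (p - y)"
      using assms(2) unfolding subadditive_def by (metis add.commute diff_add_cancel)+
    ultimately show ?thesis
      by linarith
  qed
  then show ?thesis
    unfolding locally_bounded_at_def using assms(3) by (intro exI[of _ "ball p r"] exI) auto
qed

lemma finite_in_translates_if_subadditive_bdd_above:
  fixes f :: "'a::ab_group_add \<Rightarrow> real"
  assumes "subadditive f" "bdd_above (f ` A)" "\<And>n. real n < f (x n)"
  shows "finite {n. y + x n \<in> A}"
proof -
  obtain M where M: "\<And>a. a \<in> A \<Longrightarrow> f a \<le> M"
    using assms(2) by (auto simp: bdd_above_def)
  have "real n < M + f (- y)" if "y + x n \<in> A" for n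
  proof -
    have "f (x n) \<le> f (y + x n) + f (- y)"
      using assms(1) unfolding subadditive_def by (metis add.commute add_minus_cancel)
    with M[OF that] assms(3)[of n] show ?thesis
      by linarith
  qed
  then have "{n. y + x n \<in> A} \<subseteq> {n. real n < M + f (- y)}"
    by blast
  moreover have "finite {n. real n < M + f (- y)}"
    by (rule finite_subset[of _ "{..<nat \<lceil>M + f (- y)\<rceil>}"])
      (auto simp: zless_nat_eq_int_zless less_ceiling_iff)
  ultimately show ?thesis
    by (rule finite_subset)
qed

lemma fast_sequence_if_not_bdd_above_balls:
  fixes f :: "'a::metric_space \<Rightarrow> real"
  assumes "\<And>r. 0 < r \<Longrightarrow> \<not> bdd_above (f ` ball a r)"
  obtains x where "\<And>n. dist (x n) a \<le> (1/2)^n" "\<And>n. real n < f (x n)"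
proof -
  have "\<exists>v. dist v a \<le> (1/2)^n \<and> real n < f v" for n
    using assms[of "(1/2)^n"] unfolding bdd_above_def by (force simp: dist_commute not_le)
  then show ?thesis
    using that by metis
qed

theorem corollary2p4:
  fixes f :: "'a::{ab_group_add, metric_space, complete_space} \<Rightarrow> real"
    and T :: "'a set" and k :: nat
  assumes "invariant_metric TYPE('a)"
    and "subadditive f"
    and "\<exists>M. \<forall>t\<in>T. f t \<le> M"
    and "k \<ge> 1"
    and "(universally_Baire (kfold_sum k T) \<and> \<not> Haar_meagre (kfold_sum k T)) \<or>
         (universally_measurable (kfold_sum k T) \<and> \<not> Haar_null (kfold_sum k T))"
  shows "\<forall>p. locally_bounded_at f p"
proof (rule ccontr)
  assume "\<not> (\<forall>p. locally_bounded_at f p)"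
  then have "\<not> bdd_above (f ` ball 0 r)" if "0 < r" for r
    using subadditive_locally_bounded_if_bdd_above_ball[OF assms(1,2) that] by blast
  then obtain x where small: "\<And>n. dist (x n) 0 \<le> (1/2)^n" and large: "\<And>n. real n < f (x n)"
    by (rule fast_sequence_if_not_bdd_above_balls) auto
  have "bdd_above (f ` T)"
    using assms(3) by (simp add: bdd_above_def)
  then have "bdd_above (f ` kfold_sum k T)"
    by (rule subadditive_bdd_above_kfold_sum[OF assms(2)])
  then have finite_in_translates: "finite {n. y + x n \<in> kfold_sum k T}" for y
    by (rule finite_in_translates_if_subadditive_bdd_above[OF assms(2) _ large])
  show False
    using assms(5) Haar_meagre_if_finite_in_translates[OF assms(1) small finite_in_translates]
      Haar_null_if_finite_in_translates[OF assms(1) small finite_in_translates] by blast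
qed

end
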